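(* Let $G$ be a countable discrete group, $A\subset\mathcal B(L^p(X,\mu))$ a weak* closed subalgebra, $\alpha$ a weak* continuous isometric action of $G$ on $A$, and for $t\in G$ let $E_t:W^*_p(G,A,\alpha)\to A$ be the weak* continuous contractive linear map with $E_t(\sum_s\pi(a_s)\lambda_p^E(s))=a_t$ on finite sums. If $f\in W^*_p(G,A,\alpha)$ satisfies $E_t(f)=0$ for all $t\in G$, then $f=0$.
   Context: $p\in(1,\infty)$, $E=L^p(X,\mu)$ $\sigma$-finite separable; $\mathcal B(E)$ carries the weak* topology as dual of the nuclear operators $E'\widehat\otimes E$. A weak* continuous isometric action is a homomorphism from $G$ into isometric weak* continuous automorphisms of $A$. On $\ell^p(G,E)$, $(\pi(a)\xi)(s)=\alpha_{s^{-1}}(a)\xi(s)$, $(\lambda_p^E(s)\xi)(t)=\xi(s^{-1}t)$; $W^*_p(G,A,\alpha)$ is the weak* closure of the finite sums $\sum_s\pi(a_s)\lambda_p^E(s)$ in $\mathcal B(\ell^p(G)\otimes_pE)$. *)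

theory Defs
  imports "HOL-Analysis.Analysis"
begin

text \<open>Concrete model of L^p spaces: p-integrable measurable complex functions,
  identified up to a.e. equality where relevant. Operators on L^p are
  maps on functions; equality of operators is equality a.e. on every input.\<close>

type_synonym 'a op = "('a \<Rightarrow> complex) \<Rightarrow> ('a \<Rightarrow> complex)"

definition Lp :: "'a measure \<Rightarrow> real \<Rightarrow> ('a \<Rightarrow> complex) set" where
  "Lp N p = {f. f \<in> borel_measurable N \<and> integrable N (\<lambda>x. norm (f x) powr p)}"

definition lpnorm :: "'a measure \<Rightarrow> real \<Rightarrow> ('a \<Rightarrow> complex) \<Rightarrow> real" where
  "lpnorm N p f = (\<integral>x. norm (f x) powr p \<partial>N) powr (1 / p)"

definition conj_exp :: "real \<Rightarrow> real" where
  "conj_exp p = p / (p - 1)"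

definition bounded_ops :: "'a measure \<Rightarrow> real \<Rightarrow> 'a op set" where
  "bounded_ops N p = {T.
     (\<forall>f\<in>Lp N p. T f \<in> Lp N p) \<and>
     (\<forall>f\<in>Lp N p. \<forall>g\<in>Lp N p. (AE x in N. f x = g x) \<longrightarrow> (AE x in N. T f x = T g x)) \<and>
     (\<forall>f\<in>Lp N p. \<forall>g\<in>Lp N p. \<forall>c::complex.
        AE x in N. T (\<lambda>y. f y + c * g y) x = T f x + c * T g x) \<and>
     (\<exists>C. \<forall>f\<in>Lp N p. lpnorm N p (T f) \<le> C * lpnorm N p f)}"

definition op_eq :: "'a measure \<Rightarrow> real \<Rightarrow> 'a op \<Rightarrow> 'a op \<Rightarrow> bool" where
  "op_eq N p T S \<longleftrightarrow> (\<forall>f\<in>Lp N p. AE x in N. T f x = S f x)"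

definition op_norm :: "'a measure \<Rightarrow> real \<Rightarrow> 'a op \<Rightarrow> real" where
  "op_norm N p T = Sup {lpnorm N p (T f) | f. f \<in> Lp N p \<and> lpnorm N p f \<le> 1}"

definition op_zero :: "'a op" where
  "op_zero = (\<lambda>f x. 0)"

definition op_add :: "'a op \<Rightarrow> 'a op \<Rightarrow> 'a op" where
  "op_add T S = (\<lambda>f x. T f x + S f x)"

definition op_smult :: "complex \<Rightarrow> 'a op \<Rightarrow> 'a op" where
  "op_smult c T = (\<lambda>f x. c * T f x)"

definition op_comp :: "'a op \<Rightarrow> 'a op \<Rightarrow> 'a op" where
  "op_comp T S = (\<lambda>f. T (S f))"

text \<open>Weak* continuous functionals on B(L^p(N)): those coming from nuclear operators
  in L^q \<hat>\<otimes> L^p, i.e. T \<mapsto> \<Sum>n \<langle>T x_n, y_n\<rangle> with \<Sum> \<parallel>x_n\<parallel>_p \<parallel>y_n\<parallel>_q < \<infinity>.\<close>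
definition nuclear_functionals :: "'a measure \<Rightarrow> real \<Rightarrow> ('a op \<Rightarrow> complex) set" where
  "nuclear_functionals N p =
     {(\<lambda>T. \<Sum>n. (\<integral>z. T (x n) z * y n z \<partial>N)) | x y.
        (\<forall>n. x n \<in> Lp N p \<and> y n \<in> Lp N (conj_exp p)) \<and>
        summable (\<lambda>n. lpnorm N p (x n) * lpnorm N (conj_exp p) (y n))}"

definition weak_star :: "'a measure \<Rightarrow> real \<Rightarrow> 'a op topology" where
  "weak_star N p = subtopology
     (topology_generated_by {{T. \<phi> T \<in> U} | \<phi> U. \<phi> \<in> nuclear_functionals N p \<and> open U})
     (bounded_ops N p)"

definition weak_star_cont_isometric_action ::
  "'x measure \<Rightarrow> real \<Rightarrow> 'x op set \<Rightarrow> ('g::group_add \<Rightarrow> 'x op \<Rightarrow> 'x op) \<Rightarrow> bool" where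
  "weak_star_cont_isometric_action M p A \<alpha> \<longleftrightarrow>
     (\<forall>g. \<forall>a\<in>A. \<alpha> g a \<in> A) \<and>
     (\<forall>g. \<forall>a\<in>A. \<forall>b\<in>A. \<forall>c. op_eq M p (\<alpha> g (op_add a (op_smult c b)))
                                   (op_add (\<alpha> g a) (op_smult c (\<alpha> g b)))) \<and>
     (\<forall>g. \<forall>a\<in>A. \<forall>b\<in>A. op_eq M p (\<alpha> g (op_comp a b)) (op_comp (\<alpha> g a) (\<alpha> g b))) \<and>
     (\<forall>g. \<forall>a\<in>A. op_norm M p (\<alpha> g a) = op_norm M p a) \<and>
     (\<forall>g. \<forall>b\<in>A. \<exists>a\<in>A. op_eq M p (\<alpha> g a) b) \<and>
     (\<forall>g. continuous_map (subtopology (weak_star M p) A) (subtopology (weak_star M p) A) (\<alpha> g)) \<and>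
     (\<forall>a\<in>A. op_eq M p (\<alpha> 0 a) a) \<and>
     (\<forall>g h. \<forall>a\<in>A. op_eq M p (\<alpha> (g + h) a) (\<alpha> g (\<alpha> h a)))"

text \<open>l^p(G,E) = l^p(G) \<otimes>_p L^p(X) realised as L^p(G \<times> X) with counting measure on G.
  The group G is written additively (group_add is not assumed commutative).\<close>
abbreviation big_measure :: "'x measure \<Rightarrow> ('g \<times> 'x) measure" where
  "big_measure M \<equiv> count_space UNIV \<Otimes>\<^sub>M M"

definition pi_rep :: "('g::group_add \<Rightarrow> 'x op \<Rightarrow> 'x op) \<Rightarrow> 'x op \<Rightarrow> ('g \<times> 'x) op" where
  "pi_rep \<alpha> a = (\<lambda>\<xi> (s, x). \<alpha> (- s) a (\<lambda>y. \<xi> (s, y)) x)"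

definition lambda_rep :: "'g::group_add \<Rightarrow> ('g \<times> 'x) op" where
  "lambda_rep s = (\<lambda>\<xi> (t, x). \<xi> (- s + t, x))"

definition finite_sum_op :: "('g::group_add \<Rightarrow> 'x op \<Rightarrow> 'x op) \<Rightarrow> 'g set \<Rightarrow> ('g \<Rightarrow> 'x op) \<Rightarrow> ('g \<times> 'x) op" where
  "finite_sum_op \<alpha> F a = (\<lambda>\<xi> z. \<Sum>s\<in>F. pi_rep \<alpha> (a s) (lambda_rep s \<xi>) z)"

definition finite_sums :: "('g::group_add \<Rightarrow> 'x op \<Rightarrow> 'x op) \<Rightarrow> 'x op set \<Rightarrow> ('g \<times> 'x) op set" where
  "finite_sums \<alpha> A = {finite_sum_op \<alpha> F a | F a. finite F \<and> (\<forall>s\<in>F. a s \<in> A)}"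

definition W_star_p :: "'x measure \<Rightarrow> real \<Rightarrow> 'x op set \<Rightarrow> ('g::group_add \<Rightarrow> 'x op \<Rightarrow> 'x op) \<Rightarrow> ('g \<times> 'x) op set" where
  "W_star_p M p A \<alpha> = (weak_star (big_measure M) p) closure_of (finite_sums \<alpha> A)"

definition is_subalgebra :: "'x measure \<Rightarrow> real \<Rightarrow> 'x op set \<Rightarrow> bool" where
  "is_subalgebra M p A \<longleftrightarrow> A \<subseteq> bounded_ops M p \<and> op_zero \<in> A \<and>
     (\<forall>a\<in>A. \<forall>b\<in>A. op_add a b \<in> A \<and> op_comp a b \<in> A) \<and>
     (\<forall>c. \<forall>a\<in>A. op_smult c a \<in> A)"

definition separable_Lp :: "'x measure \<Rightarrow> real \<Rightarrow> bool" where
  "separable_Lp M p \<longleftrightarrow> (\<exists>D. countable D \<and> D \<subseteq> Lp M p \<and>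
     (\<forall>f\<in>Lp M p. \<forall>e>0. \<exists>g\<in>D. lpnorm M p (\<lambda>x. f x - g x) < e))"

end

theory Submission
  imports Defs
begin

(*
  Fix r, t in G, x in L^p and y in L^q, where q is the conjugate exponent. The matrix
  coefficient g \<mapsto> \<langle>g (\<delta>\<^sub>r \<otimes> x) at t, y\<rangle> is weak* continuous on W^*_p(G, A, \<alpha>), and on
  a finite sum of terms \<pi>(a\<^sub>s) \<lambda>(s) it equals \<langle>\<alpha>\<^sub>t\<^sub>\<inverse>(a\<^sub>t\<^sub>r\<^sub>\<inverse>) x, y\<rangle>, the value
  at that sum of the weak* continuous function g \<mapsto> \<langle>\<alpha>\<^sub>t\<^sub>\<inverse>(E\<^sub>t\<^sub>r\<^sub>\<inverse> g) x, y\<rangle>. By density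
  the two functions agree on all of W^*_p. Hence E\<^sub>s f = 0 for all s makes every fibre of
  f (\<delta>\<^sub>r \<otimes> x) orthogonal to L^q, so it vanishes (M is sigma-finite). Thus f kills all
  vectors supported on one fibre, by linearity all vectors supported on finitely many
  fibres, and these are dense in l^p(G, L^p) because G is countable; boundedness of f then
  gives f = 0.

  The group is written additively: -t and t - r stand for t\<inverse> and t r\<inverse>.
*)

section \<open>Bounded operators on L^p\<close>

lemma lpnorm_nonneg: "0 \<le> lpnorm N p f"
  unfolding lpnorm_def by simp

lemma Lp_borel_measurable: "f \<in> Lp N p \<Longrightarrow> f \<in> borel_measurable N"
  unfolding Lp_def by simp

lemma Lp_zero: "(\<lambda>_. 0) \<in> Lp N p"
  unfolding Lp_def by simp

lemma lpnorm_zero: "lpnorm N p (\<lambda>_. 0) = 0"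
  unfolding lpnorm_def by simp

lemma lpnorm_cong_AE:
  assumes "f \<in> borel_measurable N" "g \<in> borel_measurable N" "AE x in N. f x = g x"
  shows "lpnorm N p f = lpnorm N p g"
  unfolding lpnorm_def using assms by (subst integral_cong_AE) auto

lemma AE_zero_if_lpnorm_le_0:
  assumes f: "f \<in> Lp N p" and "0 < p" and "lpnorm N p f \<le> 0"
  shows "AE x in N. f x = 0"
proof -
  have "(\<integral>x. norm (f x) powr p \<partial>N) = 0"
    using assms lpnorm_nonneg[of N p f] unfolding lpnorm_def by simp
  moreover have "integrable N (\<lambda>x. norm (f x) powr p)"
    using f unfolding Lp_def by simp
  ultimately have "AE x in N. norm (f x) powr p = 0"
    by (subst integral_nonneg_eq_0_iff_AE[symmetric]) auto
  then show ?thesis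
    by eventually_elim simp
qed

lemma Lp_cmult: "f \<in> Lp N p \<Longrightarrow> (\<lambda>x. c * f x) \<in> Lp N p"
  unfolding Lp_def by (auto simp: norm_mult powr_mult)

lemma lpnorm_cmult:
  assumes "0 < p"
  shows "lpnorm N p (\<lambda>x. c * f x) = norm c * lpnorm N p f"
proof -
  have "(\<integral>x. norm (c * f x) powr p \<partial>N) = norm c powr p * (\<integral>x. norm (f x) powr p \<partial>N)"
    by (simp add: norm_mult powr_mult)
  then show ?thesis
    unfolding lpnorm_def using assms by (simp add: powr_mult powr_powr)
qed

lemma Lp_if_norm_le_integrable:
  assumes q: "1 \<le> q" and y: "y \<in> borel_measurable M" and w: "integrable M w"
    and y_le_w: "\<And>z. norm (y z) \<le> w z" and w_le_1: "\<And>z. w z \<le> 1"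
  shows "y \<in> Lp M q"
proof -
  have "norm (y z) powr q \<le> w z" for z
    using powr_mono2[OF _ _ y_le_w, of q z] powr_mono'[of 1 q "w z"] q w_le_1[of z]
      order_trans[OF norm_ge_zero y_le_w, of z]
    by (cases "w z = 0") auto
  then have "integrable M (\<lambda>z. norm (y z) powr q)"
    using y by (intro Bochner_Integration.integrable_bound[OF w]) (auto intro: order_trans[OF _ abs_ge_self])
  with y show ?thesis
    unfolding Lp_def by simp
qed

lemma AE_zero_if_orthogonal_Lp:
  fixes h :: "'a \<Rightarrow> complex"
  assumes sf: "sigma_finite_measure M" and q: "1 \<le> q" and h[measurable]: "h \<in> borel_measurable M"
    and orth: "\<And>y. y \<in> Lp M q \<Longrightarrow> (\<integral>z. h z * y z \<partial>M) = 0"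
  shows "AE z in M. h z = 0"
proof -
  obtain w :: "'a \<Rightarrow> real" where w[measurable]: "w \<in> borel_measurable M"
    and w_pos: "\<And>z. 0 < w z" and w_le_1: "\<And>z. w z \<le> 1" and w_int: "integrable M w"
    using sigma_finite_measure.obtain_positive_integrable_function[OF sf] by metis
  \<comment> \<open>the damping factor keeps both \<open>y\<close> and \<open>h * y\<close> below the integrable \<open>w\<close>\<close>
  define y where "y z = complex_of_real (w z / (1 + cmod (h z))\<^sup>2) * cnj (h z)" for z
  define r where "r z = w z * (cmod (h z) / (1 + cmod (h z)))\<^sup>2" for z
  have [measurable]: "cnj \<in> borel_measurable borel"
    by (intro borel_measurable_continuous_onI continuous_intros)
  have y_le_w: "cmod (y z) \<le> w z" for z
  proof -
    have "cmod (h z) \<le> (1 + cmod (h z))\<^sup>2"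
      by (simp add: power2_eq_square algebra_simps)
    then have "cmod (h z) / (1 + cmod (h z))\<^sup>2 \<le> 1"
      by (simp add: divide_le_eq)
    then have "w z * (cmod (h z) / (1 + cmod (h z))\<^sup>2) \<le> w z"
      using w_pos[of z] by (intro mult_left_le) auto
    then show ?thesis
      unfolding y_def norm_mult norm_of_real complex_mod_cnj using w_pos[of z] by simp
  qed
  have "y \<in> borel_measurable M"
    unfolding y_def by measurable
  then have "y \<in> Lp M q"
    by (rule Lp_if_norm_le_integrable[OF q _ w_int y_le_w w_le_1])
  then have "(\<integral>z. h z * y z \<partial>M) = 0"
    by (rule orth)
  moreover have "h z * y z = complex_of_real (r z)" for z
    by (simp add: y_def r_def power_divide flip: complex_norm_square)
  ultimately have "(\<integral>z. r z \<partial>M) = 0"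
    by simp
  moreover have "r z \<le> w z" for z
  proof -
    have "(cmod (h z) / (1 + cmod (h z)))\<^sup>2 \<le> 1"
      by (intro power_le_one) (auto simp: divide_le_eq add_nonneg_eq_0_iff add_pos_nonneg)
    then show ?thesis
      unfolding r_def using w_pos[of z] by (intro mult_left_le) auto
  qed
  moreover have r_nonneg: "0 \<le> r z" for z
    using w_pos[of z] by (simp add: r_def)
  moreover have "r \<in> borel_measurable M"
    unfolding r_def by measurable
  ultimately have "integrable M r"
    by (intro Bochner_Integration.integrable_bound[OF w_int]) (auto intro: order_trans[OF _ abs_ge_self])
  with \<open>(\<integral>z. r z \<partial>M) = 0\<close> have "AE z in M. r z = 0"
    using r_nonneg by (subst integral_nonneg_eq_0_iff_AE[symmetric]) auto
  then show ?thesis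
  proof eventually_elim
    case (elim z)
    have "1 + cmod (h z) \<noteq> 0"
      by (metis add_pos_nonneg norm_ge_zero zero_less_one order_less_irrefl)
    with elim w_pos[of z] show "h z = 0"
      by (simp add: r_def)
  qed
qed

lemma bounded_ops_Lp: "T \<in> bounded_ops N p \<Longrightarrow> f \<in> Lp N p \<Longrightarrow> T f \<in> Lp N p"
  unfolding bounded_ops_def by blast

lemma bounded_ops_linear:
  "T \<in> bounded_ops N p \<Longrightarrow> f \<in> Lp N p \<Longrightarrow> g \<in> Lp N p \<Longrightarrow>
   AE x in N. T (\<lambda>y. f y + c * g y) x = T f x + c * T g x"
  unfolding bounded_ops_def by blast

lemma bounded_ops_bounded:
  "T \<in> bounded_ops N p \<Longrightarrow> \<exists>C. \<forall>f\<in>Lp N p. lpnorm N p (T f) \<le> C * lpnorm N p f"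
  unfolding bounded_ops_def by blast

lemma bounded_ops_zero:
  assumes T: "T \<in> bounded_ops N p"
  shows "AE x in N. T (\<lambda>_. 0) x = 0"
  using bounded_ops_linear[OF T Lp_zero Lp_zero, of 1] by eventually_elim simp

lemma bounded_ops_cmult:
  assumes T: "T \<in> bounded_ops N p" and f: "f \<in> Lp N p"
  shows "AE x in N. T (\<lambda>y. c * f y) x = c * T f x"
  using bounded_ops_linear[OF T Lp_zero f, of c] bounded_ops_zero[OF T] by eventually_elim simp

lemma op_eq_zero_if_op_norm_le_0:
  assumes T: "T \<in> bounded_ops N p" and p: "0 < p" and norm_T: "op_norm N p T \<le> 0"
  shows "op_eq N p T op_zero"
proof -
  obtain C where C: "\<forall>f\<in>Lp N p. lpnorm N p (T f) \<le> C * lpnorm N p f"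
    using bounded_ops_bounded[OF T] by blast
  have ball_bounded: "lpnorm N p (T f) \<le> \<bar>C\<bar> * 1" if "f \<in> Lp N p" "lpnorm N p f \<le> 1" for f
    using C that by (meson abs_ge_self abs_ge_zero lpnorm_nonneg mult_mono order_trans)
  have "bdd_above {lpnorm N p (T f) | f. f \<in> Lp N p \<and> lpnorm N p f \<le> 1}"
    using ball_bounded by (intro bdd_aboveI) auto
  then have "lpnorm N p (T f) \<le> op_norm N p T" if "f \<in> Lp N p" "lpnorm N p f \<le> 1" for f
    unfolding op_norm_def using that by (intro cSup_upper) auto
  with norm_T have ball_zero: "lpnorm N p (T f) \<le> 0" if "f \<in> Lp N p" "lpnorm N p f \<le> 1" for f
    using that by fastforce
  show ?thesis
    unfolding op_eq_def op_zero_def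
  proof
    fix f assume f: "f \<in> Lp N p"
    define c where "c = complex_of_real (1 / (lpnorm N p f + 1))"
    have "c \<noteq> 0"
      unfolding c_def of_real_eq_0_iff using lpnorm_nonneg[of N p f] by simp
    have "lpnorm N p (\<lambda>x. c * f x) \<le> 1"
      unfolding lpnorm_cmult[OF p] c_def norm_of_real using lpnorm_nonneg[of N p f] by simp
    then have "lpnorm N p (T (\<lambda>x. c * f x)) \<le> 0"
      by (rule ball_zero[OF Lp_cmult[OF f]])
    then have "AE x in N. T (\<lambda>x. c * f x) x = 0"
      by (rule AE_zero_if_lpnorm_le_0[OF bounded_ops_Lp[OF T Lp_cmult[OF f]] p])
    with bounded_ops_cmult[OF T f, of c] show "AE x in N. T f x = 0"
      by eventually_elim (use \<open>c \<noteq> 0\<close> in simp)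
  qed
qed

lemma op_norm_eq_0_if_op_eq_zero:
  assumes T: "T \<in> bounded_ops N p" and "op_eq N p T op_zero"
  shows "op_norm N p T = 0"
proof -
  have "lpnorm N p (T f) = lpnorm N p (\<lambda>_. 0)" if "f \<in> Lp N p" for f
    using assms that unfolding op_eq_def op_zero_def
    by (intro lpnorm_cong_AE Lp_borel_measurable[OF bounded_ops_Lp[OF T]]) auto
  then have "{lpnorm N p (T f) | f. f \<in> Lp N p \<and> lpnorm N p f \<le> 1} = {0}"
    unfolding lpnorm_zero using Lp_zero[of N p] lpnorm_zero[of N p] by force
  then show ?thesis
    unfolding op_norm_def by simp
qed

lemma action_op_eq_zero:
  assumes p: "0 < p" and subalg: "is_subalgebra M p A"
    and act: "weak_star_cont_isometric_action M p A \<alpha>"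
    and b: "b \<in> A" and "op_eq M p b op_zero"
  shows "op_eq M p (\<alpha> g b) op_zero"
proof -
  have Asub: "A \<subseteq> bounded_ops M p"
    using subalg unfolding is_subalgebra_def by blast
  have "\<alpha> g b \<in> A" and isometric: "op_norm M p (\<alpha> g b) = op_norm M p b"
    using act b unfolding weak_star_cont_isometric_action_def by blast+
  moreover have "op_norm M p b = 0"
    using Asub b by (intro op_norm_eq_0_if_op_eq_zero[OF _ assms(5)]) blast
  ultimately show ?thesis
    using Asub by (intro op_eq_zero_if_op_norm_le_0[OF _ p]) auto
qed

lemma action_respects_op_eq:
  assumes p: "0 < p" and subalg: "is_subalgebra M p A"
    and act: "weak_star_cont_isometric_action M p A \<alpha>"
    and b: "b \<in> A" and b': "b' \<in> A" and eq: "op_eq M p b b'"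
  shows "op_eq M p (\<alpha> g b) (\<alpha> g b')"
proof -
  define d where "d = op_add b' (op_smult (-1) b)"
  have d: "d \<in> A"
    unfolding d_def using subalg b b' unfolding is_subalgebra_def by blast
  have "op_eq M p d op_zero"
    unfolding op_eq_def
  proof
    fix f assume "f \<in> Lp M p"
    with eq have "AE x in M. b f x = b' f x"
      unfolding op_eq_def by blast
    then show "AE x in M. d f x = op_zero f x"
      unfolding d_def op_add_def op_smult_def op_zero_def by eventually_elim simp
  qed
  then have zero: "op_eq M p (\<alpha> g d) op_zero"
    by (rule action_op_eq_zero[OF p subalg act d])
  have "op_add b (op_smult 1 d) = b'"
    unfolding d_def op_add_def op_smult_def by simp
  then have sum: "op_eq M p (\<alpha> g b') (op_add (\<alpha> g b) (op_smult 1 (\<alpha> g d)))"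
    using act b d unfolding weak_star_cont_isometric_action_def by metis
  show ?thesis
    unfolding op_eq_def
  proof (intro ballI)
    fix f assume "f \<in> Lp M p"
    with zero sum
    have "AE x in M. \<alpha> g d f x = 0" "AE x in M. \<alpha> g b' f x = \<alpha> g b f x + \<alpha> g d f x"
      unfolding op_eq_def op_add_def op_smult_def op_zero_def by auto
    then show "AE x in M. \<alpha> g b f x = \<alpha> g b' f x"
      by eventually_elim simp
  qed
qed

section \<open>Weak* continuous matrix coefficients\<close>

lemma topspace_weak_star_subset: "topspace (weak_star N p) \<subseteq> bounded_ops N p"
  unfolding weak_star_def by simp

lemma continuous_map_weak_star_nuclear:
  assumes "\<phi> \<in> nuclear_functionals N p"
  shows "continuous_map (weak_star N p) euclidean \<phi>"
proof -
  let ?S = "{{T. \<phi> T \<in> U} | \<phi> U. \<phi> \<in> nuclear_functionals N p \<and> open U}"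
  have "openin (weak_star N p) {T \<in> topspace (weak_star N p). \<phi> T \<in> U}" if "open U" for U
  proof -
    have "openin (topology_generated_by ?S) {T. \<phi> T \<in> U}"
      by (rule topology_generated_by_Basis) (use assms that in blast)
    moreover have "{T \<in> topspace (weak_star N p). \<phi> T \<in> U} = {T. \<phi> T \<in> U} \<inter> bounded_ops N p"
      using openin_subset[OF calculation] unfolding weak_star_def topspace_subtopology by blast
    ultimately show ?thesis
      unfolding weak_star_def by (simp add: openin_subtopology_Int)
  qed
  then show ?thesis
    by (simp add: continuous_map_def)
qed

definition matrix_coeff :: "'a measure \<Rightarrow> ('a \<Rightarrow> complex) \<Rightarrow> ('a \<Rightarrow> complex) \<Rightarrow> 'a op \<Rightarrow> complex" where
  "matrix_coeff N x y T = (\<integral>z. T x z * y z \<partial>N)"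

lemma matrix_coeff_nuclear:
  assumes x: "x \<in> Lp N p" and y: "y \<in> Lp N (conj_exp p)"
  shows "matrix_coeff N x y \<in> nuclear_functionals N p"
proof -
  define xs where "xs n = (if n = 0 then x else (\<lambda>_. 0))" for n :: nat
  define ys where "ys n = (if n = 0 then y else (\<lambda>_. 0))" for n :: nat
  have "\<forall>n. xs n \<in> Lp N p \<and> ys n \<in> Lp N (conj_exp p)"
    unfolding xs_def ys_def using x y Lp_zero by auto
  moreover have "summable (\<lambda>n. lpnorm N p (xs n) * lpnorm N (conj_exp p) (ys n))"
    by (rule summable_finite[of "{0}"]) (auto simp: xs_def ys_def lpnorm_zero)
  moreover have "matrix_coeff N x y T = (\<Sum>n. (\<integral>z. T (xs n) z * ys n z \<partial>N))" for T
    by (subst suminf_finite[of "{0}"]) (auto simp: xs_def ys_def matrix_coeff_def)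
  ultimately show ?thesis
    unfolding nuclear_functionals_def by blast
qed

lemma continuous_map_matrix_coeff:
  "x \<in> Lp N p \<Longrightarrow> y \<in> Lp N (conj_exp p) \<Longrightarrow> continuous_map (weak_star N p) euclidean (matrix_coeff N x y)"
  by (intro continuous_map_weak_star_nuclear matrix_coeff_nuclear)

lemma matrix_coeff_cong:
  assumes "T \<in> bounded_ops N p" "S \<in> bounded_ops N p" "op_eq N p T S"
    and x: "x \<in> Lp N p" and y: "y \<in> borel_measurable N"
  shows "matrix_coeff N x y T = matrix_coeff N x y S"
  unfolding matrix_coeff_def
proof (rule integral_cong_AE)
  show "(\<lambda>z. T x z * y z) \<in> borel_measurable N"
    using Lp_borel_measurable[OF bounded_ops_Lp[OF assms(1) x]] y by measurable
  show "(\<lambda>z. S x z * y z) \<in> borel_measurable N"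
    using Lp_borel_measurable[OF bounded_ops_Lp[OF assms(2) x]] y by measurable
  show "AE z in N. T x z * y z = S x z * y z"
    using assms unfolding op_eq_def by auto
qed

lemma matrix_coeff_eq_0_if_op_eq_zero:
  assumes "op_eq N p T op_zero" and "x \<in> Lp N p"
  shows "matrix_coeff N x y T = 0"
proof -
  have "AE z in N. T x z * y z = 0"
    using assms unfolding op_eq_def op_zero_def by auto
  then show ?thesis
    unfolding matrix_coeff_def by (rule integral_eq_zero_AE)
qed

section \<open>Vectors supported on fibres of l^p(G, L^p)\<close>

definition delta_tensor :: "'g \<Rightarrow> ('x \<Rightarrow> 'b::zero) \<Rightarrow> 'g \<times> 'x \<Rightarrow> 'b" where
  "delta_tensor t k w = (if fst w = t then k (snd w) else 0)"

definition restrict_fst :: "'g set \<Rightarrow> ('g \<times> 'x \<Rightarrow> 'b::zero) \<Rightarrow> 'g \<times> 'x \<Rightarrow> 'b" where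
  "restrict_fst F \<Xi> w = (if fst w \<in> F then \<Xi> w else 0)"

lemma pair_sigma_finite_count_space:
  "sigma_finite_measure M \<Longrightarrow> pair_sigma_finite (count_space (UNIV :: 'g::countable set)) M"
  by (intro pair_sigma_finite.intro sigma_finite_measure_count_space_countable) simp_all

lemma borel_measurable_delta_tensor [measurable]:
  fixes k :: "'x \<Rightarrow> 'b::{zero, topological_space}"
  assumes [measurable]: "k \<in> borel_measurable M"
  shows "delta_tensor t k \<in> borel_measurable (count_space UNIV \<Otimes>\<^sub>M M)"
  unfolding delta_tensor_def by measurable

lemma borel_measurable_restrict_fst [measurable]:
  fixes \<Xi> :: "'g \<times> 'x \<Rightarrow> 'b::{zero, topological_space}"
  assumes [measurable]: "\<Xi> \<in> borel_measurable (count_space UNIV \<Otimes>\<^sub>M M)"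
  shows "restrict_fst F \<Xi> \<in> borel_measurable (count_space UNIV \<Otimes>\<^sub>M M)"
proof -
  have [measurable]: "Measurable.pred (count_space UNIV \<Otimes>\<^sub>M M) (\<lambda>w. fst w \<in> F)"
    by (rule measurable_compose[OF measurable_fst]) simp
  show ?thesis
    unfolding restrict_fst_def by measurable
qed

lemma integrable_delta_tensor_iff:
  fixes k :: "'x \<Rightarrow> 'b::{banach, second_countable_topology}"
  assumes sf: "sigma_finite_measure M" and k[measurable]: "k \<in> borel_measurable M"
  shows "integrable (count_space UNIV \<Otimes>\<^sub>M M) (delta_tensor t k) \<longleftrightarrow> integrable M k"
proof -
  have "(\<integral>\<^sup>+ w. norm (delta_tensor t k w) \<partial>(count_space UNIV \<Otimes>\<^sub>M M))
      = (\<integral>\<^sup>+ s. \<integral>\<^sup>+ z. norm (delta_tensor t k (s, z)) \<partial>M \<partial>count_space UNIV)"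
    by (rule sigma_finite_measure.nn_integral_fst[OF sf, symmetric]) measurable
  also have "\<dots> = (\<integral>\<^sup>+ s. (\<integral>\<^sup>+ z. norm (k z) \<partial>M) * indicator {t} s \<partial>count_space UNIV)"
    by (intro nn_integral_cong) (simp add: delta_tensor_def indicator_def)
  also have "\<dots> = (\<integral>\<^sup>+ z. norm (k z) \<partial>M)"
    by (subst nn_integral_cmult_indicator) auto
  finally show ?thesis
    unfolding integrable_iff_bounded by simp
qed

lemma integral_delta_tensor:
  fixes k :: "'x \<Rightarrow> 'b::{banach, second_countable_topology}"
  assumes sf: "sigma_finite_measure M" and k[measurable]: "k \<in> borel_measurable M"
  shows "integral\<^sup>L (count_space (UNIV :: 'g::countable set) \<Otimes>\<^sub>M M) (delta_tensor t k) = integral\<^sup>L M k"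
proof (cases "integrable M k")
  case True
  then have "integrable (count_space UNIV \<Otimes>\<^sub>M M) (delta_tensor t k)"
    using integrable_delta_tensor_iff[OF sf k, of t] by simp
  then have "integral\<^sup>L (count_space UNIV \<Otimes>\<^sub>M M) (delta_tensor t k)
      = (\<integral>s. \<integral>z. delta_tensor t k (s, z) \<partial>M \<partial>count_space UNIV)"
    by (rule pair_sigma_finite.integral_fst'[OF pair_sigma_finite_count_space[OF sf], symmetric])
  also have "\<dots> = (\<integral>s. indicator {t} s *\<^sub>R integral\<^sup>L M k \<partial>count_space UNIV)"
    by (intro Bochner_Integration.integral_cong) (simp_all add: delta_tensor_def indicator_def)
  also have "\<dots> = integral\<^sup>L M k"
    by (simp add: integral_scaleR_left measure_count_space)
  finally show ?thesis .
next
  case False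
  then show ?thesis
    using integrable_delta_tensor_iff[OF sf k, of t] by (simp add: not_integrable_integral_eq)
qed

lemma AE_pair_count_space:
  assumes sf: "sigma_finite_measure M"
    and P: "{w \<in> space (count_space UNIV \<Otimes>\<^sub>M M). P w} \<in> sets (count_space UNIV \<Otimes>\<^sub>M M)"
    and fibres: "\<And>s. AE z in M. P (s, z)"
  shows "AE w in count_space (UNIV :: 'g::countable set) \<Otimes>\<^sub>M M. P w"
  by (rule pair_sigma_finite.AE_pair_measure[OF pair_sigma_finite_count_space[OF sf] P])
    (simp add: fibres)

lemma norm_powr_delta_tensor:
  "(\<lambda>w. norm (delta_tensor t y w) powr p) = delta_tensor t (\<lambda>z. norm (y z) powr p)"
  by (auto simp: delta_tensor_def)

lemma Lp_delta_tensor: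
  assumes sf: "sigma_finite_measure M" and y: "y \<in> Lp M p"
  shows "delta_tensor t y \<in> Lp (count_space (UNIV :: 'g::countable set) \<Otimes>\<^sub>M M) p"
proof -
  have [measurable]: "y \<in> borel_measurable M"
    using y by (rule Lp_borel_measurable)
  show ?thesis
    using y integrable_delta_tensor_iff[OF sf, of "\<lambda>z. norm (y z) powr p" t]
    by (simp add: Lp_def norm_powr_delta_tensor)
qed

lemma Lp_restrict_fst:
  assumes X: "\<Xi> \<in> Lp (count_space UNIV \<Otimes>\<^sub>M M) p"
  shows "restrict_fst F \<Xi> \<in> Lp (count_space UNIV \<Otimes>\<^sub>M M) p"
proof -
  have [measurable]: "\<Xi> \<in> borel_measurable (count_space UNIV \<Otimes>\<^sub>M M)"
    using X by (rule Lp_borel_measurable)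
  have "integrable (count_space UNIV \<Otimes>\<^sub>M M) (\<lambda>w. norm (\<Xi> w) powr p)"
    using X unfolding Lp_def by simp
  then have "integrable (count_space UNIV \<Otimes>\<^sub>M M) (\<lambda>w. norm (restrict_fst F \<Xi> w) powr p)"
  proof (rule Bochner_Integration.integrable_bound)
    show "(\<lambda>w. norm (restrict_fst F \<Xi> w) powr p) \<in> borel_measurable (count_space UNIV \<Otimes>\<^sub>M M)"
      by measurable
    show "AE w in count_space UNIV \<Otimes>\<^sub>M M. norm (norm (restrict_fst F \<Xi> w) powr p) \<le> norm (norm (\<Xi> w) powr p)"
      by (simp add: restrict_fst_def)
  qed
  then show ?thesis
    unfolding Lp_def by simp
qed

lemma restrict_fst_singleton: "restrict_fst {r} \<Xi> = delta_tensor r (\<lambda>z. \<Xi> (r, z))"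
  by (auto simp: restrict_fst_def delta_tensor_def)

lemma Lp_fibre:
  assumes sf: "sigma_finite_measure M"
    and X: "\<Xi> \<in> Lp (count_space (UNIV :: 'g::countable set) \<Otimes>\<^sub>M M) p"
  shows "(\<lambda>z. \<Xi> (r, z)) \<in> Lp M p"
proof -
  have [measurable]: "\<Xi> \<in> borel_measurable (count_space UNIV \<Otimes>\<^sub>M M)"
    using X by (rule Lp_borel_measurable)
  have "restrict_fst {r} \<Xi> \<in> Lp (count_space UNIV \<Otimes>\<^sub>M M) p"
    using X by (rule Lp_restrict_fst)
  then show ?thesis
    using integrable_delta_tensor_iff[OF sf, of "\<lambda>z. norm (\<Xi> (r, z)) powr p" r]
    by (simp add: Lp_def restrict_fst_singleton norm_powr_delta_tensor)
qed

lemma finite_to_nat_less: "finite {s :: 'g::countable. to_nat s < n}"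
  using finite_vimageI[OF finite_lessThan[of n] inj_to_nat] by (simp add: vimage_def)

lemma lpnorm_restrict_fst_tail_tendsto_0:
  assumes X: "\<Xi> \<in> Lp (count_space (UNIV :: 'g::countable set) \<Otimes>\<^sub>M M) p" and p: "0 < p"
  shows "(\<lambda>n. lpnorm (count_space UNIV \<Otimes>\<^sub>M M) p (restrict_fst {s. n \<le> to_nat s} \<Xi>)) \<longlonglongrightarrow> 0"
proof -
  let ?N = "count_space (UNIV :: 'g set) \<Otimes>\<^sub>M M"
  have [measurable]: "\<Xi> \<in> borel_measurable ?N"
    using X by (rule Lp_borel_measurable)
  define tail where "tail n w = norm (restrict_fst {s. n \<le> to_nat s} \<Xi> w) powr p" for n w
  have "(\<lambda>n. integral\<^sup>L ?N (tail n)) \<longlonglongrightarrow> integral\<^sup>L ?N (\<lambda>w. 0)"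
  proof (rule integral_dominated_convergence)
    show "integrable ?N (\<lambda>w. norm (\<Xi> w) powr p)"
      using X unfolding Lp_def by simp
    show "tail n \<in> borel_measurable ?N" for n
      unfolding tail_def by measurable
    show "AE w in ?N. norm (tail n w) \<le> norm (\<Xi> w) powr p" for n
      by (simp add: tail_def restrict_fst_def)
    have vanish: "tail n w = 0" if "to_nat (fst w) < n" for n w
      using that by (simp add: tail_def restrict_fst_def)
    show "AE w in ?N. (\<lambda>n. tail n w) \<longlonglongrightarrow> 0"
    proof (rule AE_I2)
      fix w :: "'g \<times> _"
      show "(\<lambda>n. tail n w) \<longlonglongrightarrow> 0"
        by (rule tendsto_eventually, rule eventually_sequentiallyI[of "Suc (to_nat (fst w))"])
          (simp add: vanish Suc_le_eq)
    qed
  qed simp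
  then have "(\<lambda>n. integral\<^sup>L ?N (tail n) powr (1 / p)) \<longlonglongrightarrow> 0"
    using p by (intro tendsto_zero_powrI[OF _ tendsto_const]) (auto simp: tail_def)
  then show ?thesis
    unfolding lpnorm_def tail_def .
qed

lemma bounded_op_restrict_fst_finite:
  assumes T: "T \<in> bounded_ops (big_measure M) p" and X: "\<Xi> \<in> Lp (big_measure M) p"
    and "finite F" and fibres: "\<And>r. AE w in big_measure M. T (restrict_fst {r} \<Xi>) w = 0"
  shows "AE w in big_measure M. T (restrict_fst F \<Xi>) w = 0"
  using \<open>finite F\<close>
proof (induction F rule: finite_induct)
  case empty
  have "restrict_fst {} \<Xi> = (\<lambda>_. 0)"
    by (simp add: restrict_fst_def fun_eq_iff)
  then show ?case
    using bounded_ops_zero[OF T] by simp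
next
  case (insert r F)
  have split: "restrict_fst (insert r F) \<Xi> = (\<lambda>w. restrict_fst F \<Xi> w + 1 * restrict_fst {r} \<Xi> w)"
    using insert.hyps by (auto simp: restrict_fst_def fun_eq_iff)
  from bounded_ops_linear[OF T Lp_restrict_fst[OF X] Lp_restrict_fst[OF X], of F 1 "{r}"]
    insert.IH fibres[of r]
  show ?case
    unfolding split by eventually_elim simp
qed

lemma bounded_op_eq_on_restrict_fst_tail:
  assumes T: "T \<in> bounded_ops (count_space (UNIV :: 'g::countable set) \<Otimes>\<^sub>M M) p"
    and X: "\<Xi> \<in> Lp (count_space UNIV \<Otimes>\<^sub>M M) p"
    and fibres: "\<And>r. AE w in count_space UNIV \<Otimes>\<^sub>M M. T (restrict_fst {r} \<Xi>) w = 0"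
  shows "AE w in count_space UNIV \<Otimes>\<^sub>M M. T \<Xi> w = T (restrict_fst {s. n \<le> to_nat s} \<Xi>) w"
proof -
  let ?head = "restrict_fst {s. to_nat s < n} \<Xi>" and ?tail = "restrict_fst {s. n \<le> to_nat s} \<Xi>"
  have split: "(\<lambda>w. ?head w + 1 * ?tail w) = \<Xi>"
    by (auto simp: restrict_fst_def fun_eq_iff)
  have "AE w in count_space UNIV \<Otimes>\<^sub>M M. T (\<lambda>w. ?head w + 1 * ?tail w) w = T ?head w + 1 * T ?tail w"
    by (rule bounded_ops_linear[OF T Lp_restrict_fst[OF X] Lp_restrict_fst[OF X]])
  then have "AE w in count_space UNIV \<Otimes>\<^sub>M M. T \<Xi> w = T ?head w + 1 * T ?tail w"
    unfolding split .
  moreover have "AE w in count_space UNIV \<Otimes>\<^sub>M M. T ?head w = 0"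
    by (rule bounded_op_restrict_fst_finite[OF T X finite_to_nat_less fibres])
  ultimately show ?thesis
    by eventually_elim simp
qed

lemma op_eq_zero_if_zero_on_delta_tensors:
  assumes sf: "sigma_finite_measure M" and p: "0 < p"
    and T: "T \<in> bounded_ops (count_space (UNIV :: 'g::countable set) \<Otimes>\<^sub>M M) p"
    and zero: "\<And>r x. x \<in> Lp M p \<Longrightarrow> AE w in count_space UNIV \<Otimes>\<^sub>M M. T (delta_tensor r x) w = 0"
  shows "op_eq (count_space UNIV \<Otimes>\<^sub>M M) p T op_zero"
  unfolding op_eq_def op_zero_def
proof
  let ?N = "count_space (UNIV :: 'g set) \<Otimes>\<^sub>M M"
  fix \<Xi> assume X: "\<Xi> \<in> Lp ?N p"
  obtain C where C: "\<forall>f\<in>Lp ?N p. lpnorm ?N p (T f) \<le> C * lpnorm ?N p f"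
    using bounded_ops_bounded[OF T] by blast
  define tail where "tail n = restrict_fst {s. n \<le> to_nat s} \<Xi>" for n
  have tail: "tail n \<in> Lp ?N p" for n
    unfolding tail_def by (rule Lp_restrict_fst[OF X])
  have "AE w in ?N. T (restrict_fst {r} \<Xi>) w = 0" for r
    unfolding restrict_fst_singleton by (intro zero Lp_fibre[OF sf X])
  then have "AE w in ?N. T \<Xi> w = T (tail n) w" for n
    unfolding tail_def by (rule bounded_op_eq_on_restrict_fst_tail[OF T X])
  then have "lpnorm ?N p (T \<Xi>) = lpnorm ?N p (T (tail n))" for n
    by (intro lpnorm_cong_AE Lp_borel_measurable[OF bounded_ops_Lp[OF T X]]
        Lp_borel_measurable[OF bounded_ops_Lp[OF T tail]])
  then have "lpnorm ?N p (T \<Xi>) \<le> C * lpnorm ?N p (tail n)" for n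
    using bspec[OF C tail] by simp
  moreover have "(\<lambda>n. C * lpnorm ?N p (tail n)) \<longlonglongrightarrow> C * 0"
    unfolding tail_def by (intro tendsto_mult tendsto_const lpnorm_restrict_fst_tail_tendsto_0 X p)
  ultimately have "lpnorm ?N p (T \<Xi>) \<le> 0"
    by (intro LIMSEQ_le_const) auto
  then show "AE w in ?N. T \<Xi> w = 0"
    by (rule AE_zero_if_lpnorm_le_0[OF bounded_ops_Lp[OF T X] p])
qed

section \<open>Matrix coefficients of W^*_p(G, A, \<alpha>)\<close>

lemma W_star_p_subset_bounded_ops: "W_star_p M p A \<alpha> \<subseteq> bounded_ops (big_measure M) p"
  unfolding W_star_p_def by (rule order_trans[OF closure_of_subset_topspace topspace_weak_star_subset])

lemma neg_add_eq_iff_eq_diff: "- s + t = r \<longleftrightarrow> s = t - (r :: 'g::group_add)"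
  by (metis add_minus_cancel minus_add_cancel eq_diff_eq)

lemma finite_sum_op_delta_tensor:
  fixes \<alpha> :: "'g::group_add \<Rightarrow> 'x op \<Rightarrow> 'x op"
  assumes "finite F" and bounded: "\<forall>s\<in>F. \<alpha> (- t) (a s) \<in> bounded_ops M p"
  shows "AE z in M. finite_sum_op \<alpha> F a (delta_tensor r x) (t, z)
                      = (if t - r \<in> F then \<alpha> (- t) (a (t - r)) x z else 0)"
proof -
  have "AE z in M. \<forall>s\<in>F. \<alpha> (- t) (a s) (\<lambda>_. 0) z = 0"
    using bounded by (intro AE_finite_allI[OF \<open>finite F\<close>] bounded_ops_zero) auto
  then show ?thesis
  proof eventually_elim
    case (elim z)
    have "finite_sum_op \<alpha> F a (delta_tensor r x) (t, z)
        = (\<Sum>s\<in>F. if s = t - r then \<alpha> (- t) (a s) x z else 0)"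
      unfolding finite_sum_op_def pi_rep_def lambda_rep_def delta_tensor_def
      using elim by (intro sum.cong) (auto simp: neg_add_eq_iff_eq_diff if_distrib[of "\<lambda>u. \<alpha> (- t) _ u z"])
    also have "\<dots> = (if t - r \<in> F then \<alpha> (- t) (a (t - r)) x z else 0)"
      using \<open>finite F\<close> by simp
    finally show ?case .
  qed
qed

lemma matrix_coeff_delta_tensor:
  assumes sf: "sigma_finite_measure M"
    and T: "T \<in> bounded_ops (count_space (UNIV :: 'g::countable set) \<Otimes>\<^sub>M M) p"
    and x: "x \<in> Lp M p" and y[measurable]: "y \<in> borel_measurable M"
  shows "matrix_coeff (count_space UNIV \<Otimes>\<^sub>M M) (delta_tensor r x) (delta_tensor t y) T
       = (\<integral>z. T (delta_tensor r x) (t, z) * y z \<partial>M)"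
proof -
  have [measurable]: "T (delta_tensor r x) \<in> borel_measurable (count_space UNIV \<Otimes>\<^sub>M M)"
    by (rule Lp_borel_measurable[OF bounded_ops_Lp[OF T Lp_delta_tensor[OF sf x]]])
  have "(\<lambda>w. T (delta_tensor r x) w * delta_tensor t y w)
      = delta_tensor t (\<lambda>z. T (delta_tensor r x) (t, z) * y z)"
    by (auto simp: delta_tensor_def)
  then show ?thesis
    unfolding matrix_coeff_def by (simp add: integral_delta_tensor[OF sf])
qed

lemma matrix_coeff_finite_sum_op:
  fixes \<alpha> :: "'g::{countable, group_add} \<Rightarrow> 'x op \<Rightarrow> 'x op"
  assumes sf: "sigma_finite_measure M" and "finite F"
    and bounded: "\<forall>s\<in>F. \<alpha> (- t) (a s) \<in> bounded_ops M p"
    and sum_bounded: "finite_sum_op \<alpha> F a \<in> bounded_ops (big_measure M) p"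
    and x: "x \<in> Lp M p" and y[measurable]: "y \<in> borel_measurable M"
  shows "matrix_coeff (big_measure M) (delta_tensor r x) (delta_tensor t y) (finite_sum_op \<alpha> F a)
       = (if t - r \<in> F then matrix_coeff M x y (\<alpha> (- t) (a (t - r))) else 0)"
proof -
  let ?h = "finite_sum_op \<alpha> F a"
  have [measurable]: "(\<lambda>z. ?h (delta_tensor r x) (t, z)) \<in> borel_measurable M"
    using Lp_borel_measurable[OF bounded_ops_Lp[OF sum_bounded Lp_delta_tensor[OF sf x]]]
    by (rule measurable_Pair2) simp
  have sections: "AE z in M. ?h (delta_tensor r x) (t, z) * y z
      = (if t - r \<in> F then \<alpha> (- t) (a (t - r)) x z * y z else 0)"
    using finite_sum_op_delta_tensor[where \<alpha>=\<alpha> and t=t and a=a, OF \<open>finite F\<close> bounded, of r x]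
    by eventually_elim simp
  show ?thesis
  proof (cases "t - r \<in> F")
    case True
    with bounded have "\<alpha> (- t) (a (t - r)) \<in> bounded_ops M p"
      by blast
    then have [measurable]: "\<alpha> (- t) (a (t - r)) x \<in> borel_measurable M"
      by (rule Lp_borel_measurable[OF bounded_ops_Lp[OF _ x]])
    have "(\<integral>z. ?h (delta_tensor r x) (t, z) * y z \<partial>M) = matrix_coeff M x y (\<alpha> (- t) (a (t - r)))"
      unfolding matrix_coeff_def
    proof (rule integral_cong_AE)
      show "AE z in M. ?h (delta_tensor r x) (t, z) * y z = \<alpha> (- t) (a (t - r)) x z * y z"
        using sections by eventually_elim (simp only: if_P[OF True])
      show "(\<lambda>z. ?h (delta_tensor r x) (t, z) * y z) \<in> borel_measurable M"
        by measurable
      show "(\<lambda>z. \<alpha> (- t) (a (t - r)) x z * y z) \<in> borel_measurable M"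
        by measurable
    qed
    then show ?thesis
      unfolding matrix_coeff_delta_tensor[OF sf sum_bounded x y] if_P[OF True] .
  next
    case False
    have "AE z in M. ?h (delta_tensor r x) (t, z) * y z = 0"
      using sections by eventually_elim (simp only: if_not_P[OF False])
    then show ?thesis
      unfolding matrix_coeff_delta_tensor[OF sf sum_bounded x y] if_not_P[OF False]
      by (rule integral_eq_zero_AE)
  qed
qed

lemma matrix_coeff_finite_sum_op_eq_action:
  fixes \<alpha> :: "'g::{countable, group_add} \<Rightarrow> 'x op \<Rightarrow> 'x op"
  assumes sf: "sigma_finite_measure M" and p: "0 < p"
    and subalg: "is_subalgebra M p A" and act: "weak_star_cont_isometric_action M p A \<alpha>"
    and F: "finite F" and aA: "\<forall>s\<in>F. a s \<in> A"
    and sum_bounded: "finite_sum_op \<alpha> F a \<in> bounded_ops (big_measure M) p"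
    and b: "b \<in> A" and b_eq: "op_eq M p b (if t - r \<in> F then a (t - r) else op_zero)"
    and x: "x \<in> Lp M p" and y: "y \<in> borel_measurable M"
  shows "matrix_coeff (big_measure M) (delta_tensor r x) (delta_tensor t y) (finite_sum_op \<alpha> F a)
       = matrix_coeff M x y (\<alpha> (- t) b)"
proof -
  have Asub: "A \<subseteq> bounded_ops M p"
    using subalg unfolding is_subalgebra_def by blast
  have \<alpha>A: "\<alpha> (- t) c \<in> A" if "c \<in> A" for c
    using act that unfolding weak_star_cont_isometric_action_def by blast
  have "\<forall>s\<in>F. \<alpha> (- t) (a s) \<in> bounded_ops M p"
    using aA Asub \<alpha>A by blast
  note coeff = matrix_coeff_finite_sum_op[where \<alpha>=\<alpha> and t=t and a=a, OF sf F this sum_bounded x y, of r]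
  show ?thesis
  proof (cases "t - r \<in> F")
    case True
    with aA have aA': "a (t - r) \<in> A"
      by blast
    moreover from b_eq have "op_eq M p b (a (t - r))"
      by (simp only: if_P[OF True])
    ultimately have eq: "op_eq M p (\<alpha> (- t) b) (\<alpha> (- t) (a (t - r)))"
      by (rule action_respects_op_eq[OF p subalg act b])
    have "matrix_coeff M x y (\<alpha> (- t) b) = matrix_coeff M x y (\<alpha> (- t) (a (t - r)))"
      using Asub \<alpha>A[OF b] \<alpha>A[OF aA'] by (intro matrix_coeff_cong[OF _ _ eq x y]) auto
    with coeff True show ?thesis
      by simp
  next
    case False
    from b_eq have "op_eq M p b op_zero"
      by (simp only: if_not_P[OF False])
    then have "op_eq M p (\<alpha> (- t) b) op_zero"
      by (rule action_op_eq_zero[OF p subalg act b])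
    then have "matrix_coeff M x y (\<alpha> (- t) b) = 0"
      by (rule matrix_coeff_eq_0_if_op_eq_zero[OF _ x])
    with coeff False show ?thesis
      by simp
  qed
qed

lemma matrix_coeff_W_star_p:
  fixes \<alpha> :: "'g::{countable, group_add} \<Rightarrow> 'x op \<Rightarrow> 'x op"
    and E :: "'g \<Rightarrow> ('g \<times> 'x) op \<Rightarrow> 'x op"
  assumes sf: "sigma_finite_measure M" and p: "0 < p"
    and subalg: "is_subalgebra M p A" and act: "weak_star_cont_isometric_action M p A \<alpha>"
    and E_maps: "\<And>t. \<forall>g\<in>W_star_p M p A \<alpha>. E t g \<in> A"
    and E_cont: "\<And>t. continuous_map (subtopology (weak_star (big_measure M) p) (W_star_p M p A \<alpha>))
                                      (subtopology (weak_star M p) A) (E t)"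
    and E_fin: "\<And>t F a. finite F \<Longrightarrow> (\<forall>s\<in>F. a s \<in> A) \<Longrightarrow>
                  op_eq M p (E t (finite_sum_op \<alpha> F a)) (if t \<in> F then a t else op_zero)"
    and g: "g \<in> W_star_p M p A \<alpha>" and x: "x \<in> Lp M p" and y: "y \<in> Lp M (conj_exp p)"
  shows "matrix_coeff (big_measure M) (delta_tensor r x) (delta_tensor t y) g
       = matrix_coeff M x y (\<alpha> (- t) (E (t - r) g))"
proof -
  let ?W = "W_star_p M p A \<alpha>"
  let ?X = "subtopology (weak_star (big_measure M) p) ?W"
  let ?S = "topspace (weak_star (big_measure M) p) \<inter> finite_sums \<alpha> A"
  have \<alpha>_cont: "continuous_map (subtopology (weak_star M p) A) (subtopology (weak_star M p) A) (\<alpha> s)" for s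
    using act unfolding weak_star_cont_isometric_action_def by blast
  have S_sub: "?S \<subseteq> ?W"
    unfolding W_star_p_def by (rule closure_of_subset_Int)
  have "?W = weak_star (big_measure M) p closure_of ?S"
    unfolding W_star_p_def by (rule closure_of_restrict)
  with S_sub g have closure: "g \<in> ?X closure_of ?S"
    unfolding closure_of_subtopology by (simp add: Int_absorb1 Int_absorb2)
  have cont_lhs: "continuous_map ?X euclidean (matrix_coeff (big_measure M) (delta_tensor r x) (delta_tensor t y))"
    by (intro continuous_map_from_subtopology continuous_map_matrix_coeff Lp_delta_tensor sf x y)
  have cont_rhs: "continuous_map ?X euclidean (matrix_coeff M x y \<circ> \<alpha> (- t) \<circ> E (t - r))"
    by (intro continuous_map_compose[OF E_cont] continuous_map_compose[OF \<alpha>_cont]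
        continuous_map_from_subtopology continuous_map_matrix_coeff x y)
  have "matrix_coeff (big_measure M) (delta_tensor r x) (delta_tensor t y) h
      = (matrix_coeff M x y \<circ> \<alpha> (- t) \<circ> E (t - r)) h" if h_S: "h \<in> ?S" for h
  proof -
    obtain F a where F: "finite F" and aA: "\<forall>s\<in>F. a s \<in> A" and h: "h = finite_sum_op \<alpha> F a"
      using IntD2[OF h_S] unfolding finite_sums_def by blast
    have sum_bounded: "finite_sum_op \<alpha> F a \<in> bounded_ops (big_measure M) p"
      using h_S topspace_weak_star_subset unfolding h by blast
    have "E (t - r) (finite_sum_op \<alpha> F a) \<in> A"
      using h_S S_sub E_maps unfolding h by blast
    from matrix_coeff_finite_sum_op_eq_action[OF sf p subalg act F aA sum_bounded this
        E_fin[OF F aA] x Lp_borel_measurable[OF y]]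
    show ?thesis
      by (simp add: h)
  qed
  from forall_in_closure_of_eq[OF closure Hausdorff_space_euclidean cont_lhs cont_rhs this]
  show ?thesis
    by simp
qed

theorem mainTheorem8:
  fixes M :: "'x measure" and p :: real
    and A :: "'x op set"
    and \<alpha> :: "'g::{countable, group_add} \<Rightarrow> 'x op \<Rightarrow> 'x op"
    and E :: "'g \<Rightarrow> ('g \<times> 'x) op \<Rightarrow> 'x op"
    and f :: "('g \<times> 'x) op"
  assumes p: "1 < p"
    and sf: "sigma_finite_measure M"
    and sep: "separable_Lp M p"
    and subalg: "is_subalgebra M p A"
    and closed: "closedin (weak_star M p) A"
    and act: "weak_star_cont_isometric_action M p A \<alpha>"
    and E_maps: "\<And>t. \<forall>g\<in>W_star_p M p A \<alpha>. E t g \<in> A"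
    and E_lin: "\<And>t. \<forall>g\<in>W_star_p M p A \<alpha>. \<forall>h\<in>W_star_p M p A \<alpha>. \<forall>c.
                  op_eq M p (E t (op_add g (op_smult c h))) (op_add (E t g) (op_smult c (E t h)))"
    and E_contr: "\<And>t. \<forall>g\<in>W_star_p M p A \<alpha>.
                  op_norm M p (E t g) \<le> op_norm (big_measure M) p g"
    and E_cont: "\<And>t. continuous_map (subtopology (weak_star (big_measure M) p) (W_star_p M p A \<alpha>))
                                      (subtopology (weak_star M p) A) (E t)"
    and E_fin: "\<And>t F a. finite F \<Longrightarrow> (\<forall>s\<in>F. a s \<in> A) \<Longrightarrow>
                  op_eq M p (E t (finite_sum_op \<alpha> F a)) (if t \<in> F then a t else op_zero)"
    and f_in: "f \<in> W_star_p M p A \<alpha>"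
    and f_E: "\<And>t. op_eq M p (E t f) op_zero"
  shows "op_eq (big_measure M) p f op_zero"
proof -
  have p0: "0 < p"
    using p by simp
  have f_bounded: "f \<in> bounded_ops (big_measure M) p"
    using f_in W_star_p_subset_bounded_ops by blast
  have coeff_zero: "(\<integral>z. f (delta_tensor r x) (t, z) * y z \<partial>M) = 0"
    if x: "x \<in> Lp M p" and y: "y \<in> Lp M (conj_exp p)" for r t x y
  proof -
    have "E (t - r) f \<in> A"
      using E_maps f_in by blast
    then have "op_eq M p (\<alpha> (- t) (E (t - r) f)) op_zero"
      using f_E by (rule action_op_eq_zero[OF p0 subalg act])
    then have "matrix_coeff M x y (\<alpha> (- t) (E (t - r) f)) = 0"
      by (rule matrix_coeff_eq_0_if_op_eq_zero[OF _ x])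
    then show ?thesis
      using matrix_coeff_W_star_p[OF sf p0 subalg act E_maps E_cont E_fin f_in x y, of r t]
        matrix_coeff_delta_tensor[OF sf f_bounded x Lp_borel_measurable[OF y], of r t]
      by simp
  qed
  show ?thesis
  proof (rule op_eq_zero_if_zero_on_delta_tensors[OF sf p0 f_bounded])
    fix r x assume x: "x \<in> Lp M p"
    have [measurable]: "f (delta_tensor r x) \<in> borel_measurable (big_measure M)"
      by (rule Lp_borel_measurable[OF bounded_ops_Lp[OF f_bounded Lp_delta_tensor[OF sf x]]])
    have "AE z in M. f (delta_tensor r x) (t, z) = 0" for t
      using p by (intro AE_zero_if_orthogonal_Lp[OF sf] coeff_zero x) (auto simp: conj_exp_def)
    then show "AE w in big_measure M. f (delta_tensor r x) w = 0"
      by (intro AE_pair_count_space[OF sf]) auto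
  qed
qed

end
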